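(* Let $1<p<\infty$. The sequence space $h_p$, with norm $\|x\|_{h_p}=\big(\sum_{k=1}^\infty|k\,\Delta x_k|^p\big)^{1/p}$, has the $AD$ property, i.e. the set $\phi$ of finitely nonzero sequences is dense in $h_p$.
   Context: Sequences are complex sequences $x=(x_k)_{k\ge1}$, and $\Delta x_k=x_k-x_{k+1}$. For $1<p<\infty$, $$h_p=\Big\{x:\ \sum_{k=1}^{\infty}(k|\Delta x_k|)^p<\infty,\ \lim_k x_k=0\Big\}.$$ $\phi$ denotes the set of all sequences with only finitely many nonzero terms. *)

theory Defs
  imports "HOL-Analysis.Analysis"
begin

text \<open>Sequences x = (x_k)_{k>=1} are represented as functions nat => complex,
  where the value at index i represents x_{i+1}. Hence the weight k of the
  paper corresponds to Suc i, and Delta x_k = x_k - x_{k+1} corresponds to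
  x i - x (Suc i).\<close>

definition hp_term :: "real \<Rightarrow> (nat \<Rightarrow> complex) \<Rightarrow> nat \<Rightarrow> real" where
  "hp_term p x i = (real (Suc i) * cmod (x i - x (Suc i))) powr p"

definition hp :: "real \<Rightarrow> (nat \<Rightarrow> complex) set" where
  "hp p = {x. summable (hp_term p x) \<and> x \<longlonglongrightarrow> 0}"

definition hp_norm :: "real \<Rightarrow> (nat \<Rightarrow> complex) \<Rightarrow> real" where
  "hp_norm p x = (\<Sum>i. hp_term p x i) powr (1 / p)"

definition phi :: "(nat \<Rightarrow> complex) set" where
  "phi = {x. finite {i. x i \<noteq> 0}}"

end

theory Submission
  imports Defs
begin

text \<open>A finitely supported sequence has only finitely many nonzero differences, so it lies in
  every \<open>h\<^sub>p\<close>. Conversely, given \<open>x \<in> h\<^sub>p\<close> and \<open>N\<close>, the sequence \<open>y\<close> with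
  \<open>y\<^sub>k = x\<^sub>k - x\<^sub>N\<close> for \<open>k < N\<close> and \<open>y\<^sub>k = 0\<close> otherwise is finitely supported, and \<open>x - y\<close> is
  constant up to index \<open>N\<close> and equal to \<open>x\<close> afterwards. Hence the differences of \<open>x - y\<close>
  vanish before \<open>N\<close>, and \<open>\<parallel>x - y\<parallel>\<^sup>p\<close> is exactly the tail \<open>\<Sum>\<^sub>k\<^sub>\<ge>\<^sub>N |k \<Delta>x\<^sub>k|\<^sup>p\<close>, which
  tends to \<open>0\<close>.\<close>

definition hp_truncation :: "(nat \<Rightarrow> complex) \<Rightarrow> nat \<Rightarrow> nat \<Rightarrow> complex" where
  "hp_truncation x N = (\<lambda>i. if i < N then x i - x N else 0)"

lemma phi_subset_hp: "phi \<subseteq> hp p"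
proof
  fix x assume "x \<in> phi"
  then obtain M where "\<forall>i\<in>{i. x i \<noteq> 0}. i < M"
    unfolding phi_def finite_nat_set_iff_bounded by blast
  then have M: "\<And>i. i \<ge> M \<Longrightarrow> x i = 0"
    by (meson leD mem_Collect_eq)
  have "summable (hp_term p x)"
    by (rule summable_finite[of "{..<M}"]) (auto simp: hp_term_def M)
  moreover have "x \<longlonglongrightarrow> 0"
    using M by (intro tendsto_eventually) (auto simp: eventually_sequentially)
  ultimately show "x \<in> hp p"
    by (simp add: hp_def)
qed

lemma hp_truncation_in_phi: "hp_truncation x N \<in> phi"
proof -
  have "{i. hp_truncation x N i \<noteq> 0} \<subseteq> {..<N}"
    by (auto simp: hp_truncation_def split: if_splits)
  then show ?thesis
    unfolding phi_def using finite_subset by blast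
qed

lemma hp_term_diff_truncation:
  "hp_term p (x - hp_truncation x N) i = (if i < N then 0 else hp_term p x i)"
proof (cases "i < N")
  case True
  have "(x - hp_truncation x N) j = x N" if "j \<le> N" for j
    using that by (auto simp: hp_truncation_def)
  with True have "(x - hp_truncation x N) i - (x - hp_truncation x N) (Suc i) = 0"
    by simp
  with True show ?thesis
    by (simp add: hp_term_def)
qed (simp add: hp_term_def hp_truncation_def)

lemma hp_norm_diff_truncation:
  assumes "summable (hp_term p x)"
  shows "hp_norm p (x - hp_truncation x N) = (\<Sum>i. hp_term p x (i + N)) powr (1 / p)"
proof -
  have tail: "(\<lambda>i. hp_term p (x - hp_truncation x N) (i + N)) = (\<lambda>i. hp_term p x (i + N))"
    by (simp add: hp_term_diff_truncation)
  have "summable (hp_term p (x - hp_truncation x N))"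
    using assms by (subst summable_iff_shift[symmetric, of _ N]) (simp add: tail)
  then have "(\<Sum>i. hp_term p (x - hp_truncation x N) i)
      = (\<Sum>i. hp_term p (x - hp_truncation x N) (i + N))
        + (\<Sum>i<N. hp_term p (x - hp_truncation x N) i)"
    by (rule suminf_split_initial_segment)
  also have "\<dots> = (\<Sum>i. hp_term p x (i + N))"
    by (simp add: tail hp_term_diff_truncation)
  finally show ?thesis
    by (simp add: hp_norm_def)
qed

lemma hp_truncation_approx:
  assumes "0 < p" and "summable (hp_term p x)" and "0 < \<epsilon>"
  shows "\<exists>N. hp_norm p (x - hp_truncation x N) < \<epsilon>"
proof -
  obtain N where N: "norm (\<Sum>i. hp_term p x (i + N)) < \<epsilon> powr p"
    using suminf_exist_split[of "\<epsilon> powr p", OF _ assms(2)] \<open>0 < \<epsilon>\<close> by auto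
  have nonneg: "0 \<le> (\<Sum>i. hp_term p x (i + N))"
    using assms(2) by (intro suminf_nonneg) (simp, simp add: hp_term_def)
  have "(\<Sum>i. hp_term p x (i + N)) powr (1 / p) < (\<epsilon> powr p) powr (1 / p)"
    using N nonneg \<open>0 < p\<close> by (intro powr_less_mono2) auto
  also have "\<dots> = \<epsilon>"
    using \<open>0 < \<epsilon>\<close> \<open>0 < p\<close> by (simp add: powr_powr)
  finally show ?thesis
    using assms(2) by (auto simp: hp_norm_diff_truncation)
qed

theorem corollary2p4:
  fixes p :: real
  assumes "1 < p"
  shows "phi \<subseteq> hp p \<and>
         (\<forall>x\<in>hp p. \<forall>\<epsilon>>0. \<exists>y\<in>phi. hp_norm p (x - y) < \<epsilon>)"
proof (intro conjI phi_subset_hp ballI allI impI)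
  fix x \<epsilon> assume "x \<in> hp p" and "(\<epsilon>::real) > 0"
  then obtain N where "hp_norm p (x - hp_truncation x N) < \<epsilon>"
    using hp_truncation_approx[of p x \<epsilon>] assms by (auto simp: hp_def)
  then show "\<exists>y\<in>phi. hp_norm p (x - y) < \<epsilon>"
    using hp_truncation_in_phi by blast
qed

end
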